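(* Let $\Phi:\mathbb R\to\mathbb R$ and $\hbar:[0,1]\to\mathbb R$ be differentiable functions such that $\Phi$ is strictly monotone, and for every $0\le c\le1$ the function $\hbar_c(x)=\hbar(x)+\hbar(c-x)$ is strictly monotone on $[0,c/2]$ and $\Phi(\hbar_c)$ is strictly increasing on $[0,c/2]$. Let $m,n\ge2$ and let $\mathbf p\in\mathbb R^m$, $\mathbf q\in\mathbb R^n$ be probability vectors with all entries strictly positive. Then the $(\Phi,\hbar)$-entropy $H(P)=\Phi\big(\sum_{i=1}^m\sum_{j=1}^n\hbar(p_{i,j})\big)$ is strict Schur-concave on $\mathcal C(\mathbf p,\mathbf q)$.
   Context: $\mathcal C(\mathbf p,\mathbf q)$: nonnegative $m\times n$ matrices $P=(p_{i,j})$ with row sums $p_i$, column sums $q_j$, viewed as vectors in $\mathbb R^{mn}$. Majorization: for $x,y\in\mathbb R^N$ with decreasing rearrangements $\bar x,\bar y$ and $F_{\bar x}(i)=\sum_{k\le i}\bar x_k$, $x\preceq y$ if $F_{\bar x}(i)\le F_{\bar y}(i)$ for $1\le i<N$ and $F_{\bar x}(N)=F_{\bar y}(N)$; $x\prec y$ if moreover strict inequality holds for some $i<N$. A symmetric function $\Psi$ is strict Schur-concave if $x\preceq y$ implies $\Psi(x)\ge\Psi(y)$ and $x\prec y$ implies $\Psi(x)>\Psi(y)$. *)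

theory Defs
  imports "HOL-Analysis.Analysis"
begin

text \<open>Vectors of R^N are represented as real lists of length N.\<close>

definition dec_rearr :: "real list \<Rightarrow> real list" where
  "dec_rearr x = rev (sort x)"

definition partial_sums :: "real list \<Rightarrow> nat \<Rightarrow> real" where
  "partial_sums x i = sum_list (take i (dec_rearr x))"

definition majorized_le :: "real list \<Rightarrow> real list \<Rightarrow> bool" (infix "\<preceq>\<^sub>M" 50) where
  "x \<preceq>\<^sub>M y \<longleftrightarrow> length x = length y \<and>
     (\<forall>i. 1 \<le> i \<and> i < length x \<longrightarrow> partial_sums x i \<le> partial_sums y i) \<and>
     partial_sums x (length x) = partial_sums y (length y)"

definition majorized_lt :: "real list \<Rightarrow> real list \<Rightarrow> bool" (infix "\<prec>\<^sub>M" 50) where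
  "x \<prec>\<^sub>M y \<longleftrightarrow> x \<preceq>\<^sub>M y \<and>
     (\<exists>i. 1 \<le> i \<and> i < length x \<and> partial_sums x i < partial_sums y i)"

definition strict_schur_concave_on :: "real list set \<Rightarrow> (real list \<Rightarrow> real) \<Rightarrow> bool" where
  "strict_schur_concave_on S \<Psi> \<longleftrightarrow>
     (\<forall>x y. mset x = mset y \<longrightarrow> \<Psi> x = \<Psi> y) \<and>
     (\<forall>x\<in>S. \<forall>y\<in>S. (x \<preceq>\<^sub>M y \<longrightarrow> \<Psi> x \<ge> \<Psi> y) \<and> (x \<prec>\<^sub>M y \<longrightarrow> \<Psi> x > \<Psi> y))"

text \<open>m x n matrices as functions nat => nat => real (entries outside range are 0).\<close>
definition transport_polytope ::
  "nat \<Rightarrow> nat \<Rightarrow> (nat \<Rightarrow> real) \<Rightarrow> (nat \<Rightarrow> real) \<Rightarrow> (nat \<Rightarrow> nat \<Rightarrow> real) set" where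
  "transport_polytope m n p q = {P.
     (\<forall>i<m. \<forall>j<n. 0 \<le> P i j) \<and>
     (\<forall>i<m. (\<Sum>j<n. P i j) = p i) \<and>
     (\<forall>j<n. (\<Sum>i<m. P i j) = q j) \<and>
     (\<forall>i j. \<not> (i < m \<and> j < n) \<longrightarrow> P i j = 0)}"

definition mat_vec :: "nat \<Rightarrow> nat \<Rightarrow> (nat \<Rightarrow> nat \<Rightarrow> real) \<Rightarrow> real list" where
  "mat_vec m n P = concat (map (\<lambda>i. map (\<lambda>j. P i j) [0..<n]) [0..<m])"

definition phi_h_entropy :: "(real \<Rightarrow> real) \<Rightarrow> (real \<Rightarrow> real) \<Rightarrow> real list \<Rightarrow> real" where
  "phi_h_entropy \<Phi> h x = \<Phi> (sum_list (map h x))"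

end

theory Submission
  imports Defs
begin

text \<open>
  Let x \<preceq> y with decreasing rearrangements a and b. Unless a = b, let k be the first index
  with b_k < a_k and j the last index before k with a_j < b_j. Moving
  d = min (b_j - a_j) (a_k - b_k) from b_j to b_k keeps b sorted and still
  majorizing a, and makes one more coordinate agree with a; so finitely many such transfers
  lead from b to a. With c = b_j + b_k \<le> 1, a transfer replaces
  h_c(b_k) = h(b_k) + h(c - b_k) by h_c(b_k + d), where b_k < b_k + d \<le> c/2. Since
  \<Phi> \<circ> h_c is strictly increasing on [0, c/2] and \<Phi> is strictly monotone,
  \<Phi>(S + h_c(t)) is strictly increasing in t for every S, so each transfer strictly
  increases the entropy.
\<close>

definition mass_transfer :: "(nat \<Rightarrow> real) \<Rightarrow> nat \<Rightarrow> nat \<Rightarrow> real \<Rightarrow> nat \<Rightarrow> real" where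
  "mass_transfer b j k d = b(j := b j - d, k := b k + d)"

text \<open>For decreasingly sorted a and b this is the majorization a \<preceq> b.\<close>

definition prefix_majorized :: "nat \<Rightarrow> (nat \<Rightarrow> real) \<Rightarrow> (nat \<Rightarrow> real) \<Rightarrow> bool" where
  "prefix_majorized N a b \<longleftrightarrow>
     (\<forall>i\<le>N. (\<Sum>l<i. a l) \<le> (\<Sum>l<i. b l)) \<and> (\<Sum>l<N. a l) = (\<Sum>l<N. b l)"

lemma mass_transfer_apply:
  assumes "j \<noteq> k"
  shows "mass_transfer b j k d j = b j - d" "mass_transfer b j k d k = b k + d"
    "l \<noteq> j \<Longrightarrow> l \<noteq> k \<Longrightarrow> mass_transfer b j k d l = b l"
  using assms by (auto simp: mass_transfer_def)

lemma sum_lessThan_mass_transfer: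
  assumes "j \<noteq> k"
  shows "(\<Sum>l<i. mass_transfer b j k d l) =
    (\<Sum>l<i. b l) - (if j < i then d else 0) + (if k < i then d else 0)"
proof -
  have "mass_transfer b j k d l = b l - (if l = j then d else 0) + (if l = k then d else 0)" for l
    using assms by (auto simp: mass_transfer_def)
  then show ?thesis
    by (simp add: sum.distrib sum_subtractf)
qed

lemma sum_lessThan_comp_mass_transfer:
  fixes f :: "real \<Rightarrow> 'a::ab_group_add"
  assumes "j < N" "k < N" "j \<noteq> k"
  shows "(\<Sum>l<N. f (mass_transfer b j k d l)) =
    (\<Sum>l<N. f (b l)) - f (b j) - f (b k) + f (b j - d) + f (b k + d)"
proof -
  have split: "(\<Sum>l<N. g l) = g j + g k + (\<Sum>l\<in>{..<N} - {j} - {k}. g l)" for g :: "nat \<Rightarrow> 'a"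
    using assms by (simp add: sum.remove[of _ j] sum.remove[of _ k])
  have "(\<Sum>l\<in>{..<N} - {j} - {k}. f (mass_transfer b j k d l)) = (\<Sum>l\<in>{..<N} - {j} - {k}. f (b l))"
    using assms by (intro sum.cong) (auto simp: mass_transfer_apply)
  then show ?thesis
    using split[of "\<lambda>l. f (mass_transfer b j k d l)"] split[of "\<lambda>l. f (b l)"] assms
    by (simp add: mass_transfer_apply)
qed

lemma antimono_on_mass_transfer:
  assumes a: "antimono_on {..<N} a" and b: "antimono_on {..<N} b"
    and jk: "j < k" "k < N" and d: "0 \<le> d" "a j \<le> b j - d" "b k + d \<le> a k"
    and mid: "\<And>i. j < i \<Longrightarrow> i < k \<Longrightarrow> b i = a i"
  shows "antimono_on {..<N} (mass_transfer b j k d)"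
proof (rule monotone_onI)
  fix i i' assume "i \<in> {..<N}" "i' \<in> {..<N}" "i \<le> i'"
  then have ii: "i \<le> i'" "i' < N" by auto
  have A: "a y \<le> a x" and B: "b y \<le> b x" if "x \<le> y" "y < N" for x y
    using monotone_onD[OF a] monotone_onD[OF b] that by auto
  have bj: "a j \<le> mass_transfer b j k d j" "mass_transfer b j k d j \<le> b j"
    and bk: "b k \<le> mass_transfer b j k d k" "mass_transfer b j k d k \<le> a k"
    using jk d by (auto simp: mass_transfer_apply)
  consider "i' < j" | "i' = j" | "j < i'" "i' < k" | "i' = k" | "k < i'" by linarith
  then show "mass_transfer b j k d i' \<le> mass_transfer b j k d i"
  proof cases
    case 1
    then show ?thesis using ii jk B[of i i'] by (simp add: mass_transfer_apply)
  next
    case 2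
    then show ?thesis using ii jk bj B[of i j] by (cases "i = j") (auto simp: mass_transfer_apply)
  next
    case 3
    then show ?thesis using ii jk bj mid A[of j i'] A[of i i'] B[of i j]
      by (cases i j rule: linorder_cases) (auto simp: mass_transfer_apply)
  next
    case 4
    then show ?thesis using ii jk bj bk mid A[of j k] A[of i k] B[of i j]
      by (cases "i = k"; cases i j rule: linorder_cases) (auto simp: mass_transfer_apply)
  next
    case 5
    then show ?thesis using ii jk bj bk A[of j k] B[of k i'] B[of i i']
      by (cases "i = j"; cases "i = k") (auto simp: mass_transfer_apply)
  qed
qed

lemma prefix_majorized_mass_transfer:
  assumes maj: "prefix_majorized N a b" and jk: "j < k" "k < N" and d: "d \<le> b j - a j"
    and mid: "\<And>i. j < i \<Longrightarrow> i < k \<Longrightarrow> b i = a i"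
  shows "prefix_majorized N a (mass_transfer b j k d)"
  unfolding prefix_majorized_def
proof (intro conjI allI impI)
  have ps: "(\<Sum>l<i. mass_transfer b j k d l) =
      (\<Sum>l<i. b l) - (if j < i then d else 0) + (if k < i then d else 0)" for i
    using jk by (intro sum_lessThan_mass_transfer) simp
  show "(\<Sum>l<N. a l) = (\<Sum>l<N. mass_transfer b j k d l)"
    using maj jk ps[of N] by (simp add: prefix_majorized_def)
  fix i assume "i \<le> N"
  then have dom: "(\<Sum>l<i'. a l) \<le> (\<Sum>l<i'. b l)" if "i' \<le> i" for i'
    using maj that by (simp add: prefix_majorized_def)
  show "(\<Sum>l<i. a l) \<le> (\<Sum>l<i. mass_transfer b j k d l)"
  proof (cases "j < i \<and> i \<le> k")
    case True
    have "(\<Sum>l<i. b l - a l) = (\<Sum>l<Suc j. b l - a l)"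
      using True mid by (intro sum.mono_neutral_right) auto
    then have "(\<Sum>l<i. b l) - (\<Sum>l<i. a l) = (\<Sum>l<j. b l) - (\<Sum>l<j. a l) + (b j - a j)"
      by (simp add: sum_subtractf)
    then show ?thesis
      using ps[of i] dom[of j] True d by simp
  next
    case False
    then show ?thesis
      using ps[of i] dom[of i] jk by auto
  qed
qed

lemma obtain_transfer_indices:
  assumes maj: "prefix_majorized N a b" and ne: "\<exists>i<N. a i \<noteq> b i"
  obtains j k where "j < k" "k < N" "a j < b j" "b k < a k" "\<And>i. j < i \<Longrightarrow> i < k \<Longrightarrow> b i = a i"
proof -
  have dom: "i \<le> N \<Longrightarrow> (\<Sum>l<i. a l) \<le> (\<Sum>l<i. b l)" and tot: "(\<Sum>l<N. a l) = (\<Sum>l<N. b l)" for i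
    using maj by (auto simp: prefix_majorized_def)
  have "\<exists>k<N. b k < a k"
  proof (rule ccontr)
    assume "\<not> ?thesis"
    then have "\<forall>i\<in>{..<N}. a i \<le> b i" by (metis lessThan_iff not_less)
    with ne have "(\<Sum>l<N. a l) < (\<Sum>l<N. b l)"
      by (metis finite_lessThan lessThan_iff order_less_le sum_strict_mono_ex1)
    with tot show False by simp
  qed
  define k where "k = (LEAST k. k < N \<and> b k < a k)"
  have k: "k < N" "b k < a k" and below_k: "\<And>i. i < k \<Longrightarrow> a i \<le> b i"
    using LeastI_ex[OF \<open>\<exists>k<N. b k < a k\<close>] not_less_Least[of _ "\<lambda>k. k < N \<and> b k < a k"]
    unfolding k_def[symmetric] by (auto simp: not_less dest: order.strict_trans)
  define J where "J = {i. i < k \<and> a i < b i}"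
  have "J \<noteq> {}"
  proof
    assume "J = {}"
    then have "(\<Sum>l<k. b l) \<le> (\<Sum>l<k. a l)"
      by (intro sum_mono) (use J_def not_less in blast)
    moreover have "(\<Sum>l<Suc k. a l) \<le> (\<Sum>l<Suc k. b l)"
      using dom[of "Suc k"] k by simp
    ultimately show False using k by simp
  qed
  define j where "j = Max J"
  have "finite J" by (simp add: J_def)
  have j: "j < k" "a j < b j"
    using Max_in[OF \<open>finite J\<close> \<open>J \<noteq> {}\<close>] by (auto simp: j_def J_def)
  have mid: "b i = a i" if "j < i" "i < k" for i
  proof -
    have "i \<notin> J"
      using Max_ge[OF \<open>finite J\<close>, of i] that unfolding j_def by auto
    then show ?thesis
      using below_k[of i] that unfolding J_def by auto
  qed
  show thesis
    using that j k mid by blast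
qed

lemma obtain_mass_transfer_towards:
  assumes a: "antimono_on {..<N} a" and b: "antimono_on {..<N} b"
    and maj: "prefix_majorized N a b" and ne: "\<exists>i<N. a i \<noteq> b i"
  obtains j k d where "j < k" "k < N" "0 < d" "a j \<le> b j - d" "b k + d \<le> b j - d"
    "antimono_on {..<N} (mass_transfer b j k d)" "prefix_majorized N a (mass_transfer b j k d)"
    "{i. i < N \<and> a i \<noteq> mass_transfer b j k d i} \<subset> {i. i < N \<and> a i \<noteq> b i}"
proof -
  obtain j k where j: "j < k" "a j < b j" and k: "k < N" "b k < a k"
    and mid: "\<And>i. j < i \<Longrightarrow> i < k \<Longrightarrow> b i = a i"
    using obtain_transfer_indices[OF maj ne] by blast
  define d where "d = min (b j - a j) (a k - b k)"
  have d: "0 < d" "d \<le> b j - a j" "d \<le> a k - b k" using j k by (auto simp: d_def)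
  have mono': "antimono_on {..<N} (mass_transfer b j k d)"
    using d j k mid by (intro antimono_on_mass_transfer[OF a b]) auto
  then have "mass_transfer b j k d k \<le> mass_transfer b j k d j"
    using j k by (intro monotone_onD[OF mono']) auto
  then have "b k + d \<le> b j - d"
    using j by (simp add: mass_transfer_apply)
  moreover have "prefix_majorized N a (mass_transfer b j k d)"
    using d j k mid by (intro prefix_majorized_mass_transfer[OF maj]) auto
  moreover have "{i. i < N \<and> a i \<noteq> mass_transfer b j k d i} \<subset> {i. i < N \<and> a i \<noteq> b i}"
  proof -
    have "a i \<noteq> b i" if "a i \<noteq> mass_transfer b j k d i" for i
      using j k that by (cases "i = j"; cases "i = k") (auto simp: mass_transfer_apply)
    then have "{i. i < N \<and> a i \<noteq> mass_transfer b j k d i} \<subseteq> {i. i < N \<and> a i \<noteq> b i}"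
      by blast
    moreover have "a j = mass_transfer b j k d j \<or> a k = mass_transfer b j k d k"
      using j by (simp add: mass_transfer_apply d_def min_def)
    ultimately show ?thesis
      using j k by (auto simp: psubset_eq)
  qed
  ultimately show thesis
    using that[OF j(1) k(1) d(1)] d(2) mono' by simp
qed

lemma less_if_prefix_majorized:
  fixes G :: "(nat \<Rightarrow> real) \<Rightarrow> real"
  assumes G_cong: "\<And>c c'. (\<And>i. i < N \<Longrightarrow> c i = c' i) \<Longrightarrow> G c = G c'"
    and G_transfer: "\<And>c j k d. (\<And>i. i < N \<Longrightarrow> 0 \<le> c i) \<Longrightarrow> (\<Sum>i<N. c i) = (\<Sum>i<N. a i) \<Longrightarrow>
      j < N \<Longrightarrow> k < N \<Longrightarrow> 0 < d \<Longrightarrow> c k + d \<le> c j - d \<Longrightarrow> G c < G (mass_transfer c j k d)"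
    and a: "antimono_on {..<N} a" "\<And>i. i < N \<Longrightarrow> 0 \<le> a i"
    and b: "antimono_on {..<N} b" "\<And>i. i < N \<Longrightarrow> 0 \<le> b i"
    and maj: "prefix_majorized N a b" and ne: "\<exists>i<N. a i \<noteq> b i"
  shows "G b < G a"
  using b maj ne
proof (induction "card {i. i < N \<and> a i \<noteq> b i}" arbitrary: b rule: less_induct)
  case less
  obtain j k d where jk: "j < k" "k < N" and d: "0 < d" "a j \<le> b j - d" "b k + d \<le> b j - d"
    and mono': "antimono_on {..<N} (mass_transfer b j k d)" and maj': "prefix_majorized N a (mass_transfer b j k d)"
    and fewer: "{i. i < N \<and> a i \<noteq> mass_transfer b j k d i} \<subset> {i. i < N \<and> a i \<noteq> b i}"
    using obtain_mass_transfer_towards[OF a(1) less.prems(1,3,4)] by blast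
  have nonneg': "0 \<le> mass_transfer b j k d i" if "i < N" for i
    using that jk d a(2)[of j] less.prems(2)[of i] less.prems(2)[of k]
    by (cases "i = j"; cases "i = k") (auto simp: mass_transfer_apply)
  have "(\<Sum>i<N. b i) = (\<Sum>i<N. a i)"
    using less.prems(3) by (simp add: prefix_majorized_def)
  then have "G b < G (mass_transfer b j k d)"
    using jk d less.prems(2) by (intro G_transfer) auto
  also have "G (mass_transfer b j k d) \<le> G a"
  proof (cases "\<exists>i<N. a i \<noteq> mass_transfer b j k d i")
    case True
    have "card {i. i < N \<and> a i \<noteq> mass_transfer b j k d i} < card {i. i < N \<and> a i \<noteq> b i}"
      using fewer by (intro psubset_card_mono) auto
    then show ?thesis
      using less.hyps[OF _ mono' nonneg' maj' True] by simp
  next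
    case False
    then show ?thesis
      using G_cong[of a "mass_transfer b j k d"] by simp
  qed
  finally show ?case .
qed

lemma strict_mono_on_add_comp:
  fixes \<Phi> g :: "real \<Rightarrow> real"
  assumes \<Phi>: "strict_mono \<Phi> \<or> strict_antimono_on UNIV \<Phi>"
    and comp: "strict_mono_on A (\<lambda>x. \<Phi> (g x))"
  shows "strict_mono_on A (\<lambda>x. \<Phi> (s + g x))"
proof (rule strict_mono_onI)
  fix x y assume "x \<in> A" "y \<in> A" "x < y"
  then have lt: "\<Phi> (g x) < \<Phi> (g y)"
    using strict_mono_onD[OF comp] by blast
  from \<Phi> show "\<Phi> (s + g x) < \<Phi> (s + g y)"
  proof
    assume mono: "strict_mono \<Phi>"
    then have "g x < g y"
      using lt by (metis not_less strict_mono_less_eq)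
    with mono show ?thesis
      by (simp add: strict_mono_less)
  next
    assume anti: "strict_antimono_on UNIV \<Phi>"
    have "g y < g x"
    proof (rule ccontr)
      assume "\<not> g y < g x"
      then consider "g x = g y" | "g x < g y" by linarith
      then show False
        using lt monotone_onD[OF anti, of "g x" "g y"] by cases auto
    qed
    then show ?thesis
      using monotone_onD[OF anti, of "s + g y" "s + g x"] by simp
  qed
qed

lemma phi_sum_mass_transfer_less:
  fixes \<Phi> h :: "real \<Rightarrow> real"
  assumes incr: "\<And>s c. 0 \<le> c \<Longrightarrow> c \<le> 1 \<Longrightarrow> strict_mono_on {0..c/2} (\<lambda>x. \<Phi> (s + (h x + h (c - x))))"
    and jk: "j < N" "k < N" and b: "0 \<le> b k" "b j + b k \<le> 1"
    and d: "0 < d" "b k + d \<le> b j - d"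
  shows "\<Phi> (\<Sum>i<N. h (b i)) < \<Phi> (\<Sum>i<N. h (mass_transfer b j k d i))"
proof -
  define c where "c = b j + b k"
  define s where "s = (\<Sum>i<N. h (b i)) - h (b j) - h (b k)"
  have "j \<noteq> k" using d by auto
  then have "(\<Sum>i<N. h (mass_transfer b j k d i)) = s + (h (b k + d) + h (c - (b k + d)))"
    using jk by (simp add: sum_lessThan_comp_mass_transfer s_def c_def)
  moreover have "(\<Sum>i<N. h (b i)) = s + (h (b k) + h (c - b k))"
    by (simp add: s_def c_def)
  moreover have "\<Phi> (s + (h (b k) + h (c - b k))) < \<Phi> (s + (h (b k + d) + h (c - (b k + d))))"
    using b d by (intro strict_mono_onD[OF incr]) (auto simp: c_def)
  ultimately show ?thesis
    by simp
qed

lemma length_dec_rearr [simp]: "length (dec_rearr x) = length x"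
  by (simp add: dec_rearr_def)

lemma mset_dec_rearr [simp]: "mset (dec_rearr x) = mset x"
  by (simp add: dec_rearr_def)

lemma set_dec_rearr [simp]: "set (dec_rearr x) = set x"
  by (simp add: dec_rearr_def)

lemma antimono_on_nth_dec_rearr: "antimono_on {..<length x} ((!) (dec_rearr x))"
  by (intro monotone_onI) (simp add: dec_rearr_def rev_nth sorted_nth_mono)

lemma sum_list_map_dec_rearr: "sum_list (map f x) = (\<Sum>i<length x. f (dec_rearr x ! i))"
proof -
  have "sum_list (map f x) = sum_list (map f (dec_rearr x))"
    by (metis mset_dec_rearr mset_map sum_mset_sum_list)
  then show ?thesis
    by (simp add: sum_list_sum_nth atLeast0LessThan)
qed

lemma partial_sums_eq_sum: "i \<le> length x \<Longrightarrow> partial_sums x i = (\<Sum>k<i. dec_rearr x ! k)"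
  by (simp add: partial_sums_def sum_list_sum_nth atLeast0LessThan min_def)

lemma prefix_majorized_if_majorized_le:
  assumes "x \<preceq>\<^sub>M y"
  shows "prefix_majorized (length x) ((!) (dec_rearr x)) ((!) (dec_rearr y))"
proof -
  have len: "length y = length x" and tot: "partial_sums x (length x) = partial_sums y (length x)"
    and "\<And>i. 1 \<le> i \<Longrightarrow> i < length x \<Longrightarrow> partial_sums x i \<le> partial_sums y i"
    using assms by (auto simp: majorized_le_def)
  then have "partial_sums x i \<le> partial_sums y i" if "i \<le> length x" for i
    using that by (cases "i = 0 \<or> i = length x") (auto simp: partial_sums_def)
  then show ?thesis
    using len tot by (simp add: prefix_majorized_def partial_sums_eq_sum)
qed

lemma dec_rearr_ne_if_majorized_lt:
  assumes "x \<prec>\<^sub>M y"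
  shows "dec_rearr x \<noteq> dec_rearr y"
proof
  assume "dec_rearr x = dec_rearr y"
  then have "partial_sums x i = partial_sums y i" for i
    by (simp add: partial_sums_def)
  with assms show False
    by (simp add: majorized_lt_def)
qed

lemma phi_h_entropy_less_if_majorized:
  fixes \<Phi> h :: "real \<Rightarrow> real"
  assumes incr: "\<And>s c. 0 \<le> c \<Longrightarrow> c \<le> 1 \<Longrightarrow> strict_mono_on {0..c/2} (\<lambda>x. \<Phi> (s + (h x + h (c - x))))"
    and x: "\<forall>v\<in>set x. 0 \<le> v" and y: "\<forall>v\<in>set y. 0 \<le> v" "sum_list y \<le> 1"
    and maj: "x \<preceq>\<^sub>M y" and ne: "dec_rearr x \<noteq> dec_rearr y"
  shows "phi_h_entropy \<Phi> h y < phi_h_entropy \<Phi> h x"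
proof -
  define N where "N = length x"
  define a where "a = (!) (dec_rearr x)"
  define b where "b = (!) (dec_rearr y)"
  have len: "length y = N"
    using maj by (simp add: majorized_le_def N_def)
  have pm: "prefix_majorized N a b"
    using prefix_majorized_if_majorized_le[OF maj] by (simp add: N_def a_def b_def)
  have ne': "\<exists>i<N. a i \<noteq> b i"
    using ne len nth_equalityI[of "dec_rearr x" "dec_rearr y"] by (auto simp: N_def a_def b_def)
  have a_le_1: "(\<Sum>i<N. a i) \<le> 1"
    using pm y(2) sum_list_map_dec_rearr[of id y] by (simp add: prefix_majorized_def len b_def)
  have anti: "antimono_on {..<N} a" "antimono_on {..<N} b"
    using antimono_on_nth_dec_rearr[of x] antimono_on_nth_dec_rearr[of y] len
    by (simp_all add: N_def a_def b_def)
  have nonneg: "0 \<le> a i" "0 \<le> b i" if "i < N" for i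
    using x y len that nth_mem[of i "dec_rearr x"] nth_mem[of i "dec_rearr y"]
    by (auto simp: N_def a_def b_def)
  have transfer_less: "\<Phi> (\<Sum>i<N. h (c i)) < \<Phi> (\<Sum>i<N. h (mass_transfer c j k d i))"
    if c: "\<And>i. i < N \<Longrightarrow> 0 \<le> c i" and tot: "(\<Sum>i<N. c i) = (\<Sum>i<N. a i)"
      and jk: "j < N" "k < N" and d: "0 < d" "c k + d \<le> c j - d" for c j k d
  proof -
    have "j \<noteq> k" using d by auto
    then have "c j + c k = (\<Sum>i\<in>{j, k}. c i)"
      by simp
    also have "\<dots> \<le> (\<Sum>i<N. c i)"
      using c jk by (intro sum_mono2) auto
    finally show ?thesis
      using a_le_1 tot c jk d by (intro phi_sum_mass_transfer_less[OF incr]) auto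
  qed
  have "\<Phi> (\<Sum>i<N. h (b i)) < \<Phi> (\<Sum>i<N. h (a i))"
    by (rule less_if_prefix_majorized[OF _ transfer_less anti(1) nonneg(1) anti(2) nonneg(2) pm ne'])
      simp
  then show ?thesis
    by (simp add: phi_h_entropy_def sum_list_map_dec_rearr len N_def a_def b_def)
qed

lemma sum_list_mat_vec: "sum_list (mat_vec m n P) = (\<Sum>i<m. \<Sum>j<n. P i j)"
  by (induction m) (simp_all add: mat_vec_def sum_set_upt_conv_sum_list_nat[symmetric] atLeast0LessThan)

lemma mat_vec_nonneg:
  "P \<in> transport_polytope m n p q \<Longrightarrow> \<forall>v\<in>set (mat_vec m n P). 0 \<le> v"
  by (auto simp: mat_vec_def transport_polytope_def)

lemma sum_list_mat_vec_transport:
  "P \<in> transport_polytope m n p q \<Longrightarrow> sum_list (mat_vec m n P) = (\<Sum>i<m. p i)"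
  by (simp add: sum_list_mat_vec transport_polytope_def)

theorem proposition4p1:
  fixes \<Phi> h :: "real \<Rightarrow> real" and m n :: nat and p q :: "nat \<Rightarrow> real"
  assumes "\<Phi> differentiable_on UNIV"
    and "h differentiable_on {0..1}"
    and "strict_mono \<Phi> \<or> strict_antimono_on UNIV \<Phi>"
    and "\<And>c. 0 \<le> c \<Longrightarrow> c \<le> 1 \<Longrightarrow>
           strict_mono_on {0..c/2} (\<lambda>x. h x + h (c - x)) \<or>
           strict_antimono_on {0..c/2} (\<lambda>x. h x + h (c - x))"
    and "\<And>c. 0 \<le> c \<Longrightarrow> c \<le> 1 \<Longrightarrow>
           strict_mono_on {0..c/2} (\<lambda>x. \<Phi> (h x + h (c - x)))"
    and "m \<ge> 2" and "n \<ge> 2"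
    and "\<forall>i<m. p i > 0" and "(\<Sum>i<m. p i) = 1"
    and "\<forall>j<n. q j > 0" and "(\<Sum>j<n. q j) = 1"
  shows "strict_schur_concave_on (mat_vec m n ` transport_polytope m n p q) (phi_h_entropy \<Phi> h)"
proof -
  let ?H = "phi_h_entropy \<Phi> h" and ?C = "mat_vec m n ` transport_polytope m n p q"
  have incr: "\<And>s c. 0 \<le> c \<Longrightarrow> c \<le> 1 \<Longrightarrow> strict_mono_on {0..c/2} (\<lambda>x. \<Phi> (s + (h x + h (c - x))))"
    using strict_mono_on_add_comp[OF assms(3) assms(5)] by blast
  have sym: "mset x = mset y \<Longrightarrow> ?H x = ?H y" for x y
    by (metis phi_h_entropy_def mset_map sum_mset_sum_list)
  have C: "\<forall>v\<in>set x. 0 \<le> v" "sum_list x = 1" if "x \<in> ?C" for x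
    using that mat_vec_nonneg sum_list_mat_vec_transport assms(9) by auto
  have less: "?H y < ?H x" if "x \<in> ?C" "y \<in> ?C" "x \<preceq>\<^sub>M y" "dec_rearr x \<noteq> dec_rearr y" for x y
    using phi_h_entropy_less_if_majorized[OF incr] C that by simp
  show ?thesis
    unfolding strict_schur_concave_on_def
  proof (intro conjI allI ballI impI)
    fix x y assume "x \<in> ?C" "y \<in> ?C"
    show "?H y \<le> ?H x" if "x \<preceq>\<^sub>M y"
      using less[OF \<open>x \<in> ?C\<close> \<open>y \<in> ?C\<close> that] sym[of x y] mset_dec_rearr[of x] mset_dec_rearr[of y]
      by (cases "dec_rearr x = dec_rearr y") auto
    show "?H y < ?H x" if "x \<prec>\<^sub>M y"
      using less[OF \<open>x \<in> ?C\<close> \<open>y \<in> ?C\<close>] dec_rearr_ne_if_majorized_lt[OF that] that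
      by (simp add: majorized_lt_def)
  qed (rule sym)
qed

end
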